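(* Let $G$ be a finite group of odd order. (1) If $G'\cong C_{15}$, then $G'\subseteq Z(G)$. (2) If $G'\cong C_{21}$ and $G'\not\subseteq Z(G)$, then $|G/C_G(G')|=|G'\cap Z(G)|=3$, and exactly one of the following holds: (i) $|\mathrm{Cl}_G(x)|=21$ for all $x\in G\setminus C_G(G')$; (ii) there is a subset $X\subseteq G\setminus C_G(G')$ with $|X|=2|Z(C_G(G'))|$ such that $|\mathrm{Cl}_G(x)|=7$ for $x\in X$ and $|\mathrm{Cl}_G(x)|=21$ for $x\in G\setminus (C_G(G')\cup X)$.
   Context: $G'$ is the commutator subgroup, $Z(\cdot)$ the center, $C_G(G')$ the centralizer of $G'$ in $G$, $\mathrm{Cl}_G(x)$ the conjugacy class of $x$, and $C_n$ the cyclic group of order $n$. *)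

theory Defs
  imports "HOL-Algebra.Algebra"
begin

definition center :: "('a, 'b) monoid_scheme \<Rightarrow> 'a set" where
  "center G = {z \<in> carrier G. \<forall>g \<in> carrier G. z \<otimes>\<^bsub>G\<^esub> g = g \<otimes>\<^bsub>G\<^esub> z}"

definition centralizer :: "('a, 'b) monoid_scheme \<Rightarrow> 'a set \<Rightarrow> 'a set" where
  "centralizer G H = {g \<in> carrier G. \<forall>h \<in> H. g \<otimes>\<^bsub>G\<^esub> h = h \<otimes>\<^bsub>G\<^esub> g}"

definition conj_class :: "('a, 'b) monoid_scheme \<Rightarrow> 'a \<Rightarrow> 'a set" where
  "conj_class G x = {g \<otimes>\<^bsub>G\<^esub> x \<otimes>\<^bsub>G\<^esub> inv\<^bsub>G\<^esub> g | g. g \<in> carrier G}"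

abbreviation commutator_subgroup :: "('a, 'b) monoid_scheme \<Rightarrow> 'a set" where
  "commutator_subgroup G \<equiv> derived G (carrier G)"

end

(*
  Conjugation acts on the cyclic group G' = <g> of order n by g |-> g^k, and h |-> k is a
  homomorphism from G to the units modulo n whose kernel is C_G(G'); as |G| is odd, its image
  has odd order. Modulo 15 the units form a group of order 8, so the image is trivial and G' is
  central. Modulo 21 the units of odd order are 1, 4, 16; if G' is not central the image is
  exactly this group of order 3, so |G : C_G(G')| = 3 and the central elements of G' are the
  g^i with 7 dividing i. For x outside C_G(G') the class of x is [G,x] x, where the set [G,x]
  of commutators lies in G' and is a union of cosets of the subgroup D7 of order 7: either it
  is D7 (class size 7) or all of G' (class size 21). The first case happens exactly for x in
  the preimage Z of the centre of G/D7; Z meets C_G(G') in Z(C_G(G')), and Z - C_G(G')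
  consists of two cosets of this intersection.
*)

theory Submission
  imports Defs "HOL-Number_Theory.Residues"
begin

section \<open>Conjugates and commutators\<close>

definition conjugate :: "('a, 'b) monoid_scheme \<Rightarrow> 'a \<Rightarrow> 'a \<Rightarrow> 'a" where
  "conjugate G h x = h \<otimes>\<^bsub>G\<^esub> x \<otimes>\<^bsub>G\<^esub> inv\<^bsub>G\<^esub> h"

definition commutator :: "('a, 'b) monoid_scheme \<Rightarrow> 'a \<Rightarrow> 'a \<Rightarrow> 'a" where
  "commutator G h x = h \<otimes>\<^bsub>G\<^esub> x \<otimes>\<^bsub>G\<^esub> inv\<^bsub>G\<^esub> h \<otimes>\<^bsub>G\<^esub> inv\<^bsub>G\<^esub> x"

definition commutators :: "('a, 'b) monoid_scheme \<Rightarrow> 'a \<Rightarrow> 'a set" where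
  "commutators G x = (\<lambda>h. commutator G h x) ` carrier G"

text \<open>\<open>central_mod G N\<close> is the preimage of the centre of \<open>G/N\<close>.\<close>

definition central_mod :: "('a, 'b) monoid_scheme \<Rightarrow> 'a set \<Rightarrow> 'a set" where
  "central_mod G N = {x \<in> carrier G. commutators G x \<subseteq> N}"

context group
begin

lemma inv_mult_cancel_left [simp]: "a \<in> carrier G \<Longrightarrow> b \<in> carrier G \<Longrightarrow> inv a \<otimes> (a \<otimes> b) = b"
  by (simp flip: m_assoc)

lemma mult_inv_cancel_left [simp]: "a \<in> carrier G \<Longrightarrow> b \<in> carrier G \<Longrightarrow> a \<otimes> (inv a \<otimes> b) = b"
  by (simp flip: m_assoc)

lemma conjugate_closed [simp]: "h \<in> carrier G \<Longrightarrow> x \<in> carrier G \<Longrightarrow> conjugate G h x \<in> carrier G"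
  by (simp add: conjugate_def)

lemma commutator_closed [simp]: "h \<in> carrier G \<Longrightarrow> x \<in> carrier G \<Longrightarrow> commutator G h x \<in> carrier G"
  by (simp add: commutator_def)

lemma conjugate_mult:
  "\<lbrakk>h \<in> carrier G; x \<in> carrier G; y \<in> carrier G\<rbrakk>
    \<Longrightarrow> conjugate G h (x \<otimes> y) = conjugate G h x \<otimes> conjugate G h y"
  by (simp add: conjugate_def m_assoc)

lemma conjugate_inv: "h \<in> carrier G \<Longrightarrow> x \<in> carrier G \<Longrightarrow> conjugate G h (inv x) = inv (conjugate G h x)"
  by (simp add: conjugate_def m_assoc inv_mult_group)

lemma conjugate_int_pow:
  "h \<in> carrier G \<Longrightarrow> x \<in> carrier G \<Longrightarrow> conjugate G h (x [^] (i::int)) = conjugate G h x [^] i"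
  by (rule hom_int_pow) (auto simp: hom_def conjugate_mult is_group)

lemma conjugate_conjugate:
  "\<lbrakk>a \<in> carrier G; b \<in> carrier G; x \<in> carrier G\<rbrakk>
    \<Longrightarrow> conjugate G (a \<otimes> b) x = conjugate G a (conjugate G b x)"
  by (simp add: conjugate_def m_assoc inv_mult_group)

lemma conjugate_eq_iff: "h \<in> carrier G \<Longrightarrow> x \<in> carrier G \<Longrightarrow> conjugate G h x = x \<longleftrightarrow> h \<otimes> x = x \<otimes> h"
  unfolding conjugate_def by (metis inv_closed inv_solve_right m_closed)

lemma commutator_eq_one_iff:
  "h \<in> carrier G \<Longrightarrow> x \<in> carrier G \<Longrightarrow> commutator G h x = \<one> \<longleftrightarrow> h \<otimes> x = x \<otimes> h"
  unfolding commutator_def by (metis inv_closed inv_solve_right l_one m_closed r_inv m_assoc)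

lemma conjugate_eq_commutator_mult:
  "h \<in> carrier G \<Longrightarrow> x \<in> carrier G \<Longrightarrow> conjugate G h x = commutator G h x \<otimes> x"
  by (simp add: conjugate_def commutator_def m_assoc)

lemma commutator_eq_mult_conjugate:
  "u \<in> carrier G \<Longrightarrow> x \<in> carrier G \<Longrightarrow> commutator G u x = u \<otimes> conjugate G x (inv u)"
  by (simp add: commutator_def conjugate_def m_assoc)

lemma commutator_mult_left:
  "\<lbrakk>a \<in> carrier G; b \<in> carrier G; x \<in> carrier G\<rbrakk>
    \<Longrightarrow> commutator G (a \<otimes> b) x = conjugate G a (commutator G b x) \<otimes> commutator G a x"
  by (simp add: commutator_def conjugate_def m_assoc inv_mult_group)

lemma commutator_mult_right:
  "\<lbrakk>h \<in> carrier G; x \<in> carrier G; y \<in> carrier G\<rbrakk>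
    \<Longrightarrow> commutator G h (x \<otimes> y) = commutator G h x \<otimes> conjugate G x (commutator G h y)"
  by (simp add: commutator_def conjugate_def m_assoc inv_mult_group)

lemma commutator_inv_right:
  "h \<in> carrier G \<Longrightarrow> x \<in> carrier G
    \<Longrightarrow> commutator G h (inv x) = conjugate G (inv x) (inv (commutator G h x))"
  by (simp add: commutator_def conjugate_def m_assoc inv_mult_group)

lemma inv_commutator: "h \<in> carrier G \<Longrightarrow> x \<in> carrier G \<Longrightarrow> inv (commutator G h x) = commutator G x h"
  by (simp add: commutator_def m_assoc inv_mult_group)

lemma conjugate_commutator:
  "\<lbrakk>h \<in> carrier G; a \<in> carrier G; b \<in> carrier G\<rbrakk>
    \<Longrightarrow> conjugate G h (commutator G a b) = commutator G (conjugate G h a) (conjugate G h b)"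
  by (simp add: commutator_def conjugate_mult conjugate_inv)

lemma commutator_mult_commuting_left:
  assumes "z \<in> carrier G" "x \<in> carrier G" "y \<in> carrier G"
    and "z \<otimes> x = x \<otimes> z" "z \<otimes> y = y \<otimes> z"
  shows "commutator G (z \<otimes> x) y = commutator G x y"
proof -
  have "conjugate G z x = x" "conjugate G z y = y"
    using assms by (simp_all add: conjugate_eq_iff)
  then have "conjugate G z (commutator G x y) = commutator G x y"
    using assms(1-3) by (simp add: conjugate_commutator)
  moreover have "commutator G z y = \<one>"
    using assms by (simp add: commutator_eq_one_iff)
  moreover have "commutator G (z \<otimes> x) y = conjugate G z (commutator G x y) \<otimes> commutator G z y"
    using assms(1-3) by (rule commutator_mult_left)
  ultimately show ?thesis
    using assms(2,3) by simp
qed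

lemma commutator_in_derived:
  "h \<in> carrier G \<Longrightarrow> x \<in> carrier G \<Longrightarrow> commutator G h x \<in> derived G (carrier G)"
  unfolding derived_def commutator_def by (intro generate.incl) blast

lemma commutators_subset_derived: "x \<in> carrier G \<Longrightarrow> commutators G x \<subseteq> derived G (carrier G)"
  unfolding commutators_def using commutator_in_derived by blast

lemma one_mem_commutators: "x \<in> carrier G \<Longrightarrow> \<one> \<in> commutators G x"
  unfolding commutators_def by (rule image_eqI[of _ _ \<one>]) (simp_all add: commutator_def)

lemma card_conj_class: "x \<in> carrier G \<Longrightarrow> card (conj_class G x) = card (commutators G x)"
proof -
  assume x: "x \<in> carrier G"
  have "conj_class G x = (\<lambda>h. conjugate G h x) ` carrier G"
    by (auto simp: conj_class_def conjugate_def)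
  also have "\<dots> = (\<lambda>t. t \<otimes> x) ` commutators G x"
    using x by (simp add: commutators_def image_image conjugate_eq_commutator_mult)
  finally have "conj_class G x = (\<lambda>t. t \<otimes> x) ` commutators G x" .
  moreover have "inj_on (\<lambda>t. t \<otimes> x) (commutators G x)"
    using x by (intro inj_onI) (auto simp: commutators_def)
  ultimately show ?thesis
    by (simp add: card_image)
qed

lemma inv_commute_if_commute:
  assumes "a \<in> carrier G" "h \<in> carrier G" "a \<otimes> h = h \<otimes> a"
  shows "inv a \<otimes> h = h \<otimes> inv a"
proof -
  have "inv a \<otimes> h = inv a \<otimes> (h \<otimes> a) \<otimes> inv a"
    using assms(1,2) by (simp add: m_assoc)
  also have "\<dots> = h \<otimes> inv a"
    using assms(1,2) by (simp add: m_assoc flip: assms(3))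
  finally show ?thesis .
qed

lemma subgroup_centralizer:
  assumes "H \<subseteq> carrier G"
  shows "subgroup (centralizer G H) G"
proof (rule subgroupI)
  show "centralizer G H \<subseteq> carrier G"
    by (auto simp: centralizer_def)
  have "\<one> \<in> centralizer G H"
    using assms by (auto simp: centralizer_def)
  then show "centralizer G H \<noteq> {}"
    by blast
  fix a b assume a: "a \<in> centralizer G H"
  then have ac: "a \<in> carrier G" and comm_a: "\<And>h. h \<in> H \<Longrightarrow> a \<otimes> h = h \<otimes> a"
    by (auto simp: centralizer_def)
  show "inv a \<in> centralizer G H"
    using ac comm_a assms inv_commute_if_commute by (auto simp: centralizer_def)
  assume "b \<in> centralizer G H"
  then have bc: "b \<in> carrier G" and comm_b: "\<And>h. h \<in> H \<Longrightarrow> b \<otimes> h = h \<otimes> b"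
    by (auto simp: centralizer_def)
  have "a \<otimes> b \<otimes> h = h \<otimes> (a \<otimes> b)" if h: "h \<in> H" for h
  proof -
    have hc: "h \<in> carrier G"
      using h assms by blast
    have "a \<otimes> b \<otimes> h = a \<otimes> (h \<otimes> b)"
      using ac bc hc by (simp add: m_assoc comm_b[OF h])
    also have "\<dots> = h \<otimes> (a \<otimes> b)"
      using ac bc hc by (simp add: comm_a[OF h] flip: m_assoc)
    finally show ?thesis .
  qed
  then show "a \<otimes> b \<in> centralizer G H"
    using ac bc by (auto simp: centralizer_def)
qed

lemma subgroup_central_mod:
  assumes "N \<lhd> G"
  shows "subgroup (central_mod G N) G"
proof (rule subgroupI)
  interpret N: normal N G
    by (rule assms)
  show "central_mod G N \<subseteq> carrier G"
    by (auto simp: central_mod_def)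
  have "commutator G h \<one> = \<one>" if "h \<in> carrier G" for h
    using that by (simp add: commutator_eq_one_iff)
  then have "\<one> \<in> central_mod G N"
    by (auto simp: central_mod_def commutators_def)
  then show "central_mod G N \<noteq> {}"
    by blast
  fix x y assume x: "x \<in> central_mod G N"
  then have xc: "x \<in> carrier G" and cx: "\<And>h. h \<in> carrier G \<Longrightarrow> commutator G h x \<in> N"
    by (auto simp: central_mod_def commutators_def)
  have "commutator G h (inv x) \<in> N" if "h \<in> carrier G" for h
    using that xc cx[OF that]
    by (simp add: commutator_inv_right conjugate_def N.inv_op_closed1 N.m_inv_closed)
  then show "inv x \<in> central_mod G N"
    using xc by (auto simp: central_mod_def commutators_def)
  assume "y \<in> central_mod G N"
  then have yc: "y \<in> carrier G" and cy: "\<And>h. h \<in> carrier G \<Longrightarrow> commutator G h y \<in> N"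
    by (auto simp: central_mod_def commutators_def)
  have "commutator G h (x \<otimes> y) \<in> N" if "h \<in> carrier G" for h
    using that xc yc cx[OF that] cy[OF that]
    by (simp add: commutator_mult_right conjugate_def N.inv_op_closed2)
  then show "x \<otimes> y \<in> central_mod G N"
    using xc yc by (auto simp: central_mod_def commutators_def)
qed

lemma ord_eqI:
  assumes "x \<in> carrier G" "\<And>i::int. x [^] i = \<one> \<longleftrightarrow> int n dvd i"
  shows "ord x = n"
proof -
  have "int (ord x) dvd i \<longleftrightarrow> int n dvd i" for i :: int
    using int_pow_eq_id[OF assms(1)] assms(2) by simp
  then show ?thesis
    by (metis dvd_antisym dvd_refl of_nat_dvd_iff)
qed

lemma iso_integer_mod_group_generator:
  assumes D: "subgroup D G" and iso: "G\<lparr>carrier := D\<rparr> \<cong> integer_mod_group n" and n: "n > 1"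
  obtains g where "g \<in> D" "D = range (\<lambda>i::int. g [^] i)" "ord g = n"
proof -
  have grpD: "group (G\<lparr>carrier := D\<rparr>)"
    using D subgroup_imp_group is_group by blast
  obtain \<psi> where \<psi>: "\<psi> \<in> iso (integer_mod_group n) (G\<lparr>carrier := D\<rparr>)"
    using group.iso_sym[OF grpD iso] unfolding is_iso_def by blast
  then have hom: "\<psi> \<in> hom (integer_mod_group n) (G\<lparr>carrier := D\<rparr>)"
    and bij: "bij_betw \<psi> {0..<int n} D"
    using n by (auto simp: iso_def carrier_integer_mod_group)
  define g where "g = \<psi> 1"
  have one: "(1::int) \<in> carrier (integer_mod_group n)"
    using n by simp
  have g: "g \<in> D"
    using hom one unfolding g_def hom_def by auto
  have pow: "g [^] i = \<psi> (i mod n)" for i :: int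
    using hom_int_pow[OF hom one group_integer_mod_group grpD] int_pow_consistent[OF D g]
    by (simp add: g_def int_pow_integer_mod_group)
  have "D = range (\<lambda>i::int. g [^] i)"
  proof
    show "D \<subseteq> range (\<lambda>i::int. g [^] i)"
    proof
      fix d assume "d \<in> D"
      then obtain i where "i \<in> {0..<int n}" "d = \<psi> i"
        using bij by (auto simp: bij_betw_def)
      then show "d \<in> range (\<lambda>i::int. g [^] i)"
        using pow by (metis atLeastLessThan_iff mod_pos_pos_trivial rangeI)
    qed
    show "range (\<lambda>i::int. g [^] i) \<subseteq> D"
      using pow bij n by (auto simp: bij_betw_def)
  qed
  moreover have "ord g = n"
  proof (rule ord_eqI)
    show "g \<in> carrier G"
      using subgroup.mem_carrier[OF D g] .
    fix i :: int
    have "\<psi> 0 = \<one>"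
      using hom_one[OF hom] grpD by simp
    moreover have "i mod n \<in> {0..<int n}" "(0::int) \<in> {0..<int n}"
      using n by auto
    ultimately have "g [^] i = \<one> \<longleftrightarrow> i mod n = 0"
      using pow inj_onD[OF bij_betw_imp_inj_on[OF bij]] by (metis mod_0)
    then show "g [^] i = \<one> \<longleftrightarrow> int n dvd i"
      by (simp add: dvd_eq_mod_eq_0)
  qed
  ultimately show thesis
    using that g by blast
qed

end


section \<open>Congruences modulo 15 and 21\<close>

lemma cong_pow_gcd_eq_1:
  fixes k :: nat
  assumes "[k ^ a = 1] (mod n)" and "[k ^ b = 1] (mod n)"
  shows "[k ^ gcd a b = 1] (mod n)"
proof (cases "a = 0")
  case True
  then show ?thesis
    using assms by simp
next
  case False
  obtain x y where xy: "a * x = b * y + gcd a b"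
    using bezout_nat[OF False] by blast
  have "[k ^ (b * y) * k ^ gcd a b = 1 * k ^ gcd a b] (mod n)"
    using cong_pow[OF assms(2), of y] by (intro cong_mult) (simp_all add: power_mult)
  then have "[k ^ gcd a b = k ^ (b * y) * k ^ gcd a b] (mod n)"
    by (simp add: cong_sym_eq)
  also have "k ^ (b * y) * k ^ gcd a b = k ^ (a * x)"
    by (simp add: xy power_add)
  also have "[k ^ (a * x) = 1] (mod n)"
    using cong_pow[OF assms(1), of x] by (simp add: power_mult)
  finally show ?thesis .
qed

lemma cong_pow_eq_1_totient_cofactor:
  fixes k :: nat
  assumes "[k ^ m = 1] (mod n)" "m > 0" "coprime m e" "totient n = e * d"
  shows "[k ^ d = 1] (mod n)"
proof -
  have "coprime (k ^ m) n"
    using cong_imp_coprime[OF cong_sym[OF assms(1)]] by simp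
  then have "coprime k n"
    using assms(2) by simp
  then have "[k ^ (e * d) = 1] (mod n)"
    using euler_theorem[of k n] by (simp add: assms(4))
  then have "[k ^ gcd m (e * d) = 1] (mod n)"
    using cong_pow_gcd_eq_1 assms(1) by blast
  moreover have "gcd m (e * d) dvd d"
    using assms(3) by (simp add: gcd_mult_right_left_cancel)
  ultimately show ?thesis
    by (metis cong_pow dvdE power_mult power_one)
qed

lemma cube_roots_of_unity_mod_21:
  fixes r :: nat
  assumes "r < 21" "r ^ 3 mod 21 = 1"
  shows "r \<in> {1, 4, 16}"
proof -
  have "r \<in> {0, 1, 2, 3, 4, 5, 6, 7, 8, 9, 10, 11, 12, 13, 14, 15, 16, 17, 18, 19, 20}"
    using assms(1) by simp presburger
  then show ?thesis
    using assms(2) by auto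
qed

lemma odd_pow_cong_1_mod_15:
  fixes k :: nat
  assumes "odd m" "[k ^ m = 1] (mod 15)"
  shows "[k = 1] (mod 15)"
proof -
  have "totient (3 * 5) = totient 3 * totient 5"
    by (rule totient_mult_coprime) code_simp
  then have totient: "totient 15 = 8 * 1"
    by (simp add: totient_prime)
  have "coprime m 8"
    using assms(1) coprime_power_right_iff[of m 2 3] by simp
  then show ?thesis
    using cong_pow_eq_1_totient_cofactor[OF assms(2) odd_pos[OF assms(1)] _ totient] by simp
qed

lemma odd_pow_cong_1_mod_21:
  fixes k :: nat
  assumes "odd m" "[k ^ m = 1] (mod 21)"
  shows "k mod 21 \<in> {1, 4, 16}"
proof -
  have "totient (3 * 7) = totient 3 * totient 7"
    by (rule totient_mult_coprime) code_simp
  then have totient: "totient 21 = 4 * 3"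
    by (simp add: totient_prime)
  have "coprime m 4"
    using assms(1) coprime_power_right_iff[of m 2 2] by simp
  then have "[k ^ 3 = 1] (mod 21)"
    using cong_pow_eq_1_totient_cofactor[OF assms(2) odd_pos[OF assms(1)] _ totient] by simp
  then have "(k mod 21) ^ 3 mod 21 = 1"
    by (simp add: cong_def power_mod)
  then show ?thesis
    by (intro cube_roots_of_unity_mod_21) simp_all
qed

lemma exists_dvd_21_sub_3: "k \<in> {4, 16} \<Longrightarrow> \<exists>c::int. 21 dvd (1 - int k) * c - 3"
proof -
  assume "k \<in> {4, 16}"
  then have "21 dvd (1 - int k) * (if k = 4 then -1 else 4) - 3"
    by auto
  then show ?thesis ..
qed

lemma dvd_21_iff_dvd_7:
  assumes "k \<in> {4, 16}"
  shows "(21::int) dvd (int k - 1) * i \<longleftrightarrow> 7 dvd i"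
proof -
  have "coprime (7::int) 5"
    by code_simp
  then obtain c :: int where c: "int k - 1 = 3 * c" "coprime 7 c"
    using assms by (auto intro!: exI[of _ 1] exI[of _ 5])
  have "(21::int) dvd (int k - 1) * i \<longleftrightarrow> 3 * 7 dvd 3 * (c * i)"
    by (simp add: c mult.assoc)
  also have "\<dots> \<longleftrightarrow> 7 dvd c * i"
    using dvd_mult_cancel_left[of 3 7 "c * i"] by simp
  also have "\<dots> \<longleftrightarrow> 7 dvd i"
    using c(2) by (simp add: coprime_dvd_mult_right_iff)
  finally show ?thesis .
qed

lemma three_dvd_cases:
  assumes "\<not> 3 dvd s" "k \<in> {1, 4, 16}"
  shows "3 dvd i \<or> 3 dvd i - s \<or> 3 dvd i - (int k + 1) * s"
proof -
  have "3 dvd i \<or> 3 dvd i - s \<or> 3 dvd i - 2 * s"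
    using assms(1) by presburger
  moreover have "3 dvd (int k + 1) * s - 2 * s"
    using assms(2) by auto
  ultimately show ?thesis
    by (metis diff_diff_eq2 dvd_diff diff_add_cancel)
qed


section \<open>The conjugation action on a cyclic normal subgroup\<close>

locale cyclic_normal_subgroup = normal D G for D and G (structure) +
  fixes g :: 'a
  assumes generator_closed [simp]: "g \<in> carrier G"
    and D_eq: "D = range (\<lambda>i::int. g [^] i)"
    and one_less_ord: "1 < ord g"
begin

lemma pow_eq_iff: "g [^] (i::int) = g [^] j \<longleftrightarrow> int (ord g) dvd i - j"
  by (simp add: int_pow_eq dvd_diff_commute)

lemma pow_mod_ord: "g [^] (i mod int (ord g)) = g [^] i"
  by (simp add: pow_eq_iff flip: mod_eq_dvd_iff)

lemma pow_in_D [simp]: "g [^] (i::int) \<in> D"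
  by (simp add: D_eq)

lemma mem_D_iff: "d \<in> D \<longleftrightarrow> (\<exists>i::int. d = g [^] i)"
  by (auto simp: D_eq)

lemma D_commute: "d \<in> D \<Longrightarrow> e \<in> D \<Longrightarrow> d \<otimes> e = e \<otimes> d"
  by (auto simp: mem_D_iff simp flip: int_pow_mult) (simp add: add.commute)

lemma subgroup_centralizer_D: "subgroup (centralizer G D) G"
  by (rule subgroup_centralizer[OF subset])

text \<open>Conjugation by \<open>h\<close> raises the generator to the power \<open>conj_exp h\<close>, normalised below
  \<open>ord g\<close>; this makes \<open>conj_exp\<close> a homomorphism into the units modulo \<open>ord g\<close> whose
  kernel is the centraliser of \<open>D\<close>.\<close>

definition conj_exp :: "'a \<Rightarrow> nat" where
  "conj_exp h = (SOME k. k < ord g \<and> conjugate G h g = g [^] k)"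

lemma conj_exp_spec:
  assumes "h \<in> carrier G"
  shows "conj_exp h < ord g \<and> conjugate G h g = g [^] conj_exp h"
proof -
  obtain i :: int where i: "conjugate G h g = g [^] i"
    using inv_op_closed2[OF assms pow_in_D[of 1]] by (auto simp: mem_D_iff conjugate_def)
  define k where "k = nat (i mod int (ord g))"
  have "k < ord g"
    using one_less_ord by (simp add: k_def nat_less_iff)
  moreover have "conjugate G h g = g [^] k"
    using one_less_ord by (simp add: i k_def pow_mod_ord flip: int_pow_int)
  ultimately show ?thesis
    unfolding conj_exp_def by (rule someI[where x = k, OF conjI])
qed

lemma conj_exp_less: "h \<in> carrier G \<Longrightarrow> conj_exp h < ord g"
  using conj_exp_spec by blast

lemma conjugate_generator: "h \<in> carrier G \<Longrightarrow> conjugate G h g = g [^] conj_exp h"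
  using conj_exp_spec by blast

lemma conjugate_generator_pow:
  "h \<in> carrier G \<Longrightarrow> conjugate G h (g [^] (i::int)) = g [^] (int (conj_exp h) * i)"
  by (simp add: conjugate_int_pow conjugate_generator int_pow_pow flip: int_pow_int)

lemma conj_exp_eqI:
  assumes "h \<in> carrier G" "k < ord g" "conjugate G h g = g [^] k"
  shows "conj_exp h = k"
proof -
  have "g [^] int (conj_exp h) = g [^] int k"
    using assms conjugate_generator by (simp add: int_pow_int)
  then have "int (conj_exp h) mod ord g = int k mod ord g"
    by (simp add: pow_eq_iff mod_eq_dvd_iff)
  then show ?thesis
    using assms(2) conj_exp_less[OF assms(1)] by (simp flip: of_nat_mod)
qed

lemma conj_exp_one [simp]: "conj_exp \<one> = 1"
  using one_less_ord by (intro conj_exp_eqI) (auto simp: conjugate_def)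

lemma conj_exp_mult:
  assumes "a \<in> carrier G" "b \<in> carrier G"
  shows "conj_exp (a \<otimes> b) = conj_exp a * conj_exp b mod ord g"
proof (rule conj_exp_eqI)
  have "conjugate G (a \<otimes> b) g = conjugate G a (conjugate G b g)"
    using assms by (rule conjugate_conjugate) simp
  also have "\<dots> = g [^] (int (conj_exp a) * int (conj_exp b))"
    using assms conjugate_generator_pow[of a "int (conj_exp b)"]
    by (simp add: conjugate_generator flip: int_pow_int)
  also have "\<dots> = g [^] (conj_exp a * conj_exp b mod ord g)"
    by (simp add: pow_mod_ord of_nat_mod flip: int_pow_int)
  finally show "conjugate G (a \<otimes> b) g = g [^] (conj_exp a * conj_exp b mod ord g)" .
qed (use assms one_less_ord in auto)

lemma conj_exp_nat_pow: "h \<in> carrier G \<Longrightarrow> conj_exp (h [^] (m::nat)) = conj_exp h ^ m mod ord g"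
proof (induction m)
  case 0
  then show ?case
    using one_less_ord by simp
next
  case (Suc m)
  then show ?case
    by (simp add: conj_exp_mult mod_mult_right_eq mult.commute)
qed

lemma conj_exp_pow_order: "h \<in> carrier G \<Longrightarrow> [conj_exp h ^ order G = 1] (mod ord g)"
  using conj_exp_nat_pow[of h "order G"] one_less_ord by (simp add: pow_order_eq_1 cong_def)

lemma mem_centralizer_iff: "h \<in> centralizer G D \<longleftrightarrow> h \<in> carrier G \<and> conj_exp h = 1"
proof
  assume h: "h \<in> centralizer G D"
  then have "h \<in> carrier G" "h \<otimes> g = g \<otimes> h"
    using pow_in_D[of 1] by (auto simp: centralizer_def)
  then show "h \<in> carrier G \<and> conj_exp h = 1"
    using one_less_ord by (auto intro: conj_exp_eqI simp: conjugate_eq_iff)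
next
  assume "h \<in> carrier G \<and> conj_exp h = 1"
  then show "h \<in> centralizer G D"
    by (auto simp: centralizer_def mem_D_iff conjugate_generator_pow simp flip: conjugate_eq_iff)
qed

lemma conj_exp_eq_iff:
  assumes "x \<in> carrier G" "y \<in> carrier G"
  shows "conj_exp x = conj_exp y \<longleftrightarrow> x \<otimes> inv y \<in> centralizer G D"
proof
  assume "conj_exp x = conj_exp y"
  then have "conj_exp (x \<otimes> inv y) = conj_exp (y \<otimes> inv y)"
    using assms by (simp only: conj_exp_mult inv_closed)
  then show "x \<otimes> inv y \<in> centralizer G D"
    using assms by (simp add: mem_centralizer_iff)
next
  assume c: "x \<otimes> inv y \<in> centralizer G D"
  have "conj_exp x = conj_exp (x \<otimes> inv y \<otimes> y)"
    using assms by (simp add: m_assoc)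
  also have "\<dots> = conj_exp (x \<otimes> inv y) * conj_exp y mod ord g"
    using assms by (intro conj_exp_mult) simp_all
  also have "\<dots> = conj_exp y"
    using c conj_exp_less[OF assms(2)] by (simp add: mem_centralizer_iff)
  finally show "conj_exp x = conj_exp y" .
qed

lemma conj_exp_fibre:
  assumes H: "subgroup H G" and p: "p \<in> H"
  shows "{z \<in> H. conj_exp z = conj_exp p} = (\<lambda>c. c \<otimes> p) ` (H \<inter> centralizer G D)"
proof (intro equalityI subsetI)
  have pc: "p \<in> carrier G"
    using subgroup.mem_carrier[OF H p] .
  fix z
  assume "z \<in> {z \<in> H. conj_exp z = conj_exp p}"
  then have z: "z \<in> H" "conj_exp z = conj_exp p"
    by simp_all
  have zc: "z \<in> carrier G"
    using subgroup.mem_carrier[OF H z(1)] .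
  show "z \<in> (\<lambda>c. c \<otimes> p) ` (H \<inter> centralizer G D)"
  proof (rule image_eqI)
    show "z = z \<otimes> inv p \<otimes> p"
      using zc pc by (simp add: m_assoc)
    show "z \<otimes> inv p \<in> H \<inter> centralizer G D"
    proof (rule IntI)
      show "z \<otimes> inv p \<in> H"
        using subgroup.m_closed[OF H z(1) subgroup.m_inv_closed[OF H p]] .
      show "z \<otimes> inv p \<in> centralizer G D"
        using conj_exp_eq_iff[OF zc pc] z(2) by simp
    qed
  qed
next
  have pc: "p \<in> carrier G"
    using subgroup.mem_carrier[OF H p] .
  fix z
  assume "z \<in> (\<lambda>c. c \<otimes> p) ` (H \<inter> centralizer G D)"
  then obtain c where z: "z = c \<otimes> p" and "c \<in> H \<inter> centralizer G D"
    by (rule imageE)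
  then have c: "c \<in> H" "c \<in> centralizer G D"
    by simp_all
  have cc: "c \<in> carrier G"
    using subgroup.mem_carrier[OF H c(1)] .
  have "z \<in> H"
    using subgroup.m_closed[OF H c(1) p] z by simp
  moreover have "conj_exp z = conj_exp p"
    using conj_exp_eq_iff[of z p] c(2) cc pc by (simp add: z m_assoc)
  ultimately show "z \<in> {z \<in> H. conj_exp z = conj_exp p}"
    by simp
qed

lemma card_subgroup_conj_exp:
  assumes fin: "finite (carrier G)" and H: "subgroup H G"
  shows "card H = card (conj_exp ` H) * card (H \<inter> centralizer G D)"
proof -
  have finH: "finite H"
    using finite_subset[OF subgroup.subset[OF H] fin] .
  have "card H = (\<Sum>k \<in> conj_exp ` H. card {z \<in> H. conj_exp z = k})"
    using sum.image_gen[OF finH, of "\<lambda>_. 1::nat" conj_exp] by simp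
  also have "\<dots> = (\<Sum>k \<in> conj_exp ` H. card (H \<inter> centralizer G D))"
  proof (rule sum.cong)
    fix k assume "k \<in> conj_exp ` H"
    then obtain p where p: "k = conj_exp p" "p \<in> H"
      by (rule imageE)
    have "inj_on (\<lambda>c. c \<otimes> p) (H \<inter> centralizer G D)"
    proof (rule inj_onI)
      fix a b assume "a \<in> H \<inter> centralizer G D" "b \<in> H \<inter> centralizer G D" "a \<otimes> p = b \<otimes> p"
      then show "a = b"
        using right_cancel[OF subgroup.mem_carrier[OF H p(2)]] subgroup.mem_carrier[OF H] by simp
    qed
    then show "card {z \<in> H. conj_exp z = k} = card (H \<inter> centralizer G D)"
      using conj_exp_fibre[OF H p(2)] p(1) by (simp add: card_image)
  qed simp
  finally show ?thesis
    by simp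
qed

lemma D_subset_center_iff: "D \<subseteq> center G \<longleftrightarrow> (\<forall>h \<in> carrier G. conj_exp h = 1)"
proof -
  have "D \<subseteq> center G \<longleftrightarrow> carrier G \<subseteq> centralizer G D"
    using subset by (auto simp: center_def centralizer_def)
  then show ?thesis
    by (auto simp: mem_centralizer_iff)
qed

lemma conjugate_pow_eq_iff:
  "h \<in> carrier G
    \<Longrightarrow> conjugate G h (g [^] (i::int)) = g [^] i \<longleftrightarrow> int (ord g) dvd (int (conj_exp h) - 1) * i"
  by (simp add: conjugate_generator_pow pow_eq_iff left_diff_distrib)

lemma commutator_pow_left:
  "x \<in> carrier G \<Longrightarrow> commutator G (g [^] (i::int)) x = g [^] ((1 - int (conj_exp x)) * i)"
  by (simp add: commutator_eq_mult_conjugate conjugate_generator_pow algebra_simps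
      flip: int_pow_neg int_pow_mult)

lemma card_powers_multiple:
  assumes "d dvd ord g"
  shows "card (range (\<lambda>j::int. g [^] (int d * j))) = ord g div d"
proof -
  define e where "e = ord g div d"
  have ord: "ord g = d * e"
    using assms by (simp add: e_def)
  then have "d > 0" "e > 0"
    using one_less_ord by (auto intro!: gr0I)
  have eq: "g [^] (int d * i) = g [^] (int d * j) \<longleftrightarrow> int e dvd i - j" for i j
    using \<open>d > 0\<close> by (simp add: pow_eq_iff ord right_diff_distrib flip: right_diff_distrib)
  have "range (\<lambda>j::int. g [^] (int d * j)) = (\<lambda>j. g [^] (int d * j)) ` {0..<int e}"
  proof -
    have "g [^] (int d * j) = g [^] (int d * (j mod int e))" for j
      by (simp add: eq mod_eq_dvd_iff[symmetric])
    moreover have "j mod int e \<in> {0..<int e}" for j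
      using \<open>e > 0\<close> by simp
    ultimately show ?thesis
      by blast
  qed
  moreover have "inj_on (\<lambda>j. g [^] (int d * j)) {0..<int e}"
    by (rule inj_onI) (simp add: eq flip: mod_eq_dvd_iff)
  ultimately show ?thesis
    by (simp add: card_image e_def)
qed

lemma D_subset_center_if_ord_15:
  assumes "odd (order G)" "ord g = 15"
  shows "D \<subseteq> center G"
  unfolding D_subset_center_iff
proof
  fix h assume "h \<in> carrier G"
  then have "[conj_exp h = 1] (mod 15)" "conj_exp h < 15"
    using assms conj_exp_pow_order conj_exp_less odd_pow_cong_1_mod_15 by metis+
  then show "conj_exp h = 1"
    by (simp add: cong_def)
qed

end


section \<open>Odd order groups with a non-central derived subgroup of order 21\<close>

locale odd_order_cyclic_derived_21 = cyclic_normal_subgroup "derived G (carrier G)" G g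
  for G (structure) and g +
  assumes finite_carrier: "finite (carrier G)"
    and odd_order: "odd (order G)"
    and ord_generator: "ord g = 21"
    and derived_not_central: "\<not> derived G (carrier G) \<subseteq> center G"
begin

abbreviation "D \<equiv> derived G (carrier G)"
abbreviation "C \<equiv> centralizer G D"

text \<open>The subgroup of order 7 of \<open>D\<close>; for \<open>x \<notin> C\<close> the set \<open>commutators G x\<close> is a union of
  its cosets.\<close>

definition D7 :: "'a set" where
  "D7 = range (\<lambda>j::int. g [^] (3 * j))"

lemma conj_exp_cases:
  assumes "h \<in> carrier G"
  shows "conj_exp h \<in> {1, 4, 16}"
proof -
  have "conj_exp h mod 21 \<in> {1, 4, 16}"
    using odd_pow_cong_1_mod_21[OF odd_order] conj_exp_pow_order[OF assms]
    by (simp add: ord_generator)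
  then show ?thesis
    using conj_exp_less[OF assms] by (simp add: ord_generator)
qed

lemma conj_exp_noncentral: "h \<in> carrier G \<Longrightarrow> h \<notin> C \<Longrightarrow> conj_exp h \<in> {4, 16}"
  using conj_exp_cases mem_centralizer_iff by auto

lemma conj_exp_image:
  assumes H: "subgroup H G" and "\<not> H \<subseteq> C"
  shows "conj_exp ` H = {1, 4, 16}"
proof
  obtain x where x: "x \<in> H" "x \<notin> C"
    using assms(2) by blast
  have xc: "x \<in> carrier G"
    using subgroup.mem_carrier[OF H x(1)] .
  have "conj_exp (x \<otimes> x) = conj_exp x * conj_exp x mod 21"
    using xc by (simp add: conj_exp_mult ord_generator)
  then have "{1, 4, 16} \<subseteq> {conj_exp \<one>, conj_exp x, conj_exp (x \<otimes> x)}"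
    using conj_exp_noncentral[OF xc x(2)] by auto
  also have "\<dots> \<subseteq> conj_exp ` H"
    using subgroup.one_closed[OF H] x(1) subgroup.m_closed[OF H x(1) x(1)]
    by (simp del: conj_exp_one add: imageI)
  finally show "{1, 4, 16} \<subseteq> conj_exp ` H" .
  show "conj_exp ` H \<subseteq> {1, 4, 16}"
    using conj_exp_cases subgroup.mem_carrier[OF H] by (simp add: image_subset_iff)
qed

lemma carrier_not_subset_centralizer: "\<not> carrier G \<subseteq> C"
proof
  assume "carrier G \<subseteq> C"
  then have "\<forall>h \<in> carrier G. conj_exp h = 1"
    by (auto simp: mem_centralizer_iff)
  then show False
    using derived_not_central D_subset_center_iff by simp
qed

lemma card_rcosets_centralizer: "card (rcosets C) = 3"
proof -
  have "C \<subseteq> carrier G"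
    using subgroup.subset[OF subgroup_centralizer_D] .
  then have "order G = 3 * card C"
    using card_subgroup_conj_exp[OF finite_carrier subgroup_self]
      conj_exp_image[OF subgroup_self carrier_not_subset_centralizer]
    by (simp add: order_def Int_absorb1)
  moreover have "card (rcosets C) * card C = order G"
    using lagrange[OF subgroup_centralizer_D] .
  moreover have "card C > 0"
    using subgroup.one_closed[OF subgroup_centralizer_D] \<open>C \<subseteq> carrier G\<close>
      finite_subset[OF _ finite_carrier] card_gt_0_iff by blast
  ultimately show ?thesis
    by simp
qed

lemma pow_fixed_iff:
  "h \<in> carrier G \<Longrightarrow> h \<notin> C \<Longrightarrow> conjugate G h (g [^] (i::int)) = g [^] i \<longleftrightarrow> 7 dvd i"
  using conj_exp_noncentral dvd_21_iff_dvd_7 by (simp add: conjugate_pow_eq_iff ord_generator)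

lemma pow_central_iff: "g [^] (i::int) \<in> center G \<longleftrightarrow> 7 dvd i"
proof
  obtain h0 where h0: "h0 \<in> carrier G" "h0 \<notin> C"
    using carrier_not_subset_centralizer by blast
  assume "g [^] i \<in> center G"
  then have "conjugate G h0 (g [^] i) = g [^] i"
    using h0(1) by (simp add: center_def conjugate_eq_iff)
  then show "7 dvd i"
    using pow_fixed_iff[OF h0] by simp
next
  assume i: "7 dvd i"
  have "conjugate G h (g [^] i) = g [^] i" if h: "h \<in> carrier G" for h
  proof (cases "h \<in> C")
    case True
    then show ?thesis
      by (simp add: conjugate_generator_pow mem_centralizer_iff)
  next
    case False
    then show ?thesis
      using pow_fixed_iff[OF h] i by simp
  qed
  then show "g [^] i \<in> center G"
    by (simp add: center_def conjugate_eq_iff)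
qed

lemma card_derived_inter_center: "card (D \<inter> center G) = 3"
proof -
  have "D \<inter> center G = range (\<lambda>j::int. g [^] (7 * j))"
  proof (intro equalityI subsetI)
    fix d assume "d \<in> D \<inter> center G"
    then have "d \<in> D" "d \<in> center G"
      by simp_all
    then obtain i :: int where i: "d = g [^] i" "g [^] i \<in> center G"
      unfolding mem_D_iff by blast
    then obtain t where "i = 7 * t"
      using pow_central_iff by blast
    then show "d \<in> range (\<lambda>j::int. g [^] (7 * j))"
      using i(1) by simp
  next
    fix d assume "d \<in> range (\<lambda>j::int. g [^] (7 * j))"
    then obtain j :: int where "d = g [^] (7 * j)"
      by blast
    then show "d \<in> D \<inter> center G"
      using pow_central_iff[of "7 * j"] by simp
  qed
  then show ?thesis
    using card_powers_multiple[of 7] by (simp add: ord_generator)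
qed

lemma card_derived: "card D = 21"
  using card_powers_multiple[of 1] by (simp add: D_eq ord_generator)

lemma card_D7: "card D7 = 7"
  using card_powers_multiple[of 3] by (simp add: D7_def ord_generator)

lemma pow_mem_D7_iff: "g [^] (i::int) \<in> D7 \<longleftrightarrow> 3 dvd i"
proof
  assume "g [^] i \<in> D7"
  then obtain j :: int where "g [^] i = g [^] (3 * j)"
    by (auto simp: D7_def)
  then have "21 dvd i - 3 * j"
    by (simp add: pow_eq_iff ord_generator)
  then have "3 dvd i - 3 * j + 3 * j"
    by (intro dvd_add) (auto intro: dvd_trans[of 3 21])
  then show "3 dvd i"
    by simp
next
  assume "3 dvd i"
  then obtain t where "i = 3 * t" ..
  then show "g [^] i \<in> D7"
    by (simp add: D7_def)
qed

lemma D7_normal: "D7 \<lhd> G"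
proof (rule normal_invI)
  have "D7 = range (\<lambda>j::int. (g [^] (3::int)) [^] j)"
    by (simp add: D7_def int_pow_pow)
  then show "subgroup D7 G"
    by (simp add: subgroup_of_powers)
  show "x \<otimes> a \<otimes> inv x \<in> D7" if x: "x \<in> carrier G" and "a \<in> D7" for x a
  proof -
    obtain j :: int where "a = g [^] (3 * j)"
      using \<open>a \<in> D7\<close> by (auto simp: D7_def)
    then have "x \<otimes> a \<otimes> inv x = g [^] (3 * (int (conj_exp x) * j))"
      using x by (simp add: conjugate_generator_pow mult.left_commute flip: conjugate_def)
    then show ?thesis
      by (simp add: D7_def)
  qed
qed

lemma D7_mult_commutators:
  assumes x: "x \<in> carrier G" "x \<notin> C" and a: "a \<in> D7" and t: "t \<in> commutators G x"
  shows "a \<otimes> t \<in> commutators G x"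
proof -
  obtain j :: int where j: "a = g [^] (3 * j)"
    using a by (auto simp: D7_def)
  obtain h where h: "h \<in> carrier G" "t = commutator G h x"
    using t by (auto simp: commutators_def)
  have tD: "t \<in> D"
    using h x commutator_in_derived by simp
  txt \<open>Since \<open>[g^i, x] = g^(i(1 - conj_exp x))\<close> and \<open>1 - conj_exp x\<close> is 3 times a unit modulo 21,
    a suitable \<open>d \<in> D\<close> has \<open>[d, x] = a\<close>; then \<open>[d h, x] = t a\<close>.\<close>
  obtain c where c: "21 dvd (1 - int (conj_exp x)) * c - 3"
    using exists_dvd_21_sub_3 conj_exp_noncentral[OF x] by blast
  define d where "d = g [^] (c * j)"
  have "commutator G d x = a"
  proof -
    have "21 dvd ((1 - int (conj_exp x)) * c - 3) * j"
      using c by simp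
    then show ?thesis
      using x by (simp add: d_def j commutator_pow_left pow_eq_iff ord_generator algebra_simps)
  qed
  moreover have "conjugate G d t = t"
    using D_commute[of d t] tD h x by (simp add: d_def conjugate_eq_iff)
  ultimately have "commutator G (d \<otimes> h) x = t \<otimes> a"
    using h x by (simp add: d_def commutator_mult_left)
  also have "\<dots> = a \<otimes> t"
    using D_commute[OF tD] a by (simp add: j)
  finally have "a \<otimes> t = commutator G (d \<otimes> h) x" ..
  moreover have "d \<otimes> h \<in> carrier G"
    using h by (simp add: d_def)
  ultimately show ?thesis
    unfolding commutators_def by (rule image_eqI)
qed

lemma D7_subset_commutators: "x \<in> carrier G \<Longrightarrow> x \<notin> C \<Longrightarrow> D7 \<subseteq> commutators G x"
proof
  fix a assume x: "x \<in> carrier G" "x \<notin> C" and a: "a \<in> D7"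
  have "a \<otimes> \<one> \<in> commutators G x"
    by (rule D7_mult_commutators[OF x a one_mem_commutators[OF x(1)]])
  moreover have "a \<in> carrier G"
    using a by (auto simp: D7_def)
  ultimately show "a \<in> commutators G x"
    by simp
qed

lemma card_conj_class_central_mod:
  assumes "x \<in> central_mod G D7" "x \<notin> C"
  shows "card (conj_class G x) = 7"
proof -
  have "x \<in> carrier G" "commutators G x \<subseteq> D7"
    using assms by (simp_all add: central_mod_def)
  then have "commutators G x = D7"
    using D7_subset_commutators assms(2) by (intro equalityI)
  then show ?thesis
    using \<open>x \<in> carrier G\<close> card_conj_class card_D7 by simp
qed

lemma card_conj_class_not_central_mod:
  assumes x: "x \<in> carrier G" "x \<notin> C" and nz: "x \<notin> central_mod G D7"
  shows "card (conj_class G x) = 21"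
proof -
  obtain h where h: "h \<in> carrier G" "commutator G h x \<notin> D7"
    using x nz by (auto simp: central_mod_def commutators_def)
  obtain s :: int where s: "commutator G h x = g [^] s"
    using commutator_in_derived[OF h(1) x(1)] unfolding mem_D_iff by blast
  have s3: "\<not> 3 dvd s"
    using h(2) s pow_mem_D7_iff by simp
  have hh: "commutator G (h \<otimes> h) x = g [^] ((int (conj_exp h) + 1) * s)"
    using h x s by (simp add: commutator_mult_left conjugate_generator_pow distrib_right
        flip: int_pow_mult)
  have gs: "g [^] s \<in> commutators G x"
    unfolding commutators_def using h(1) s by (intro image_eqI[where x = h]) simp_all
  have ghs: "g [^] ((int (conj_exp h) + 1) * s) \<in> commutators G x"
    unfolding commutators_def using h(1) hh
    by (intro image_eqI[where x = "h \<otimes> h"]) (simp_all del: int_pow_mult)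
  txt \<open>As \<open>3\<close> does not divide \<open>s\<close> and \<open>conj_exp h + 1 \<equiv> 2 (mod 3)\<close>, the commutators \<open>1\<close>,
    \<open>g^s\<close> and \<open>g^((conj_exp h + 1) s)\<close> represent all three cosets of \<open>D7\<close> in \<open>D\<close>.\<close>
  have "g [^] i \<in> commutators G x" for i :: int
  proof -
    obtain r where r: "g [^] r \<in> commutators G x" "3 dvd i - r"
      using three_dvd_cases[OF s3 conj_exp_cases[OF h(1)], of i] one_mem_commutators[OF x(1)] gs ghs
      by (metis diff_0_right int_pow_0)
    have "g [^] (i - r) \<otimes> g [^] r \<in> commutators G x"
      using D7_mult_commutators[OF x _ r(1)] r(2) pow_mem_D7_iff by blast
    then show ?thesis
      by (simp flip: int_pow_mult)
  qed
  then have "commutators G x = D"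
    using commutators_subset_derived[OF x(1)] by (auto simp: mem_D_iff)
  then show ?thesis
    using x card_conj_class card_derived by simp
qed

lemma conjugate_commutator_centralizer:
  assumes h: "h \<in> carrier G" and c: "c \<in> C" and y: "y \<in> C"
  shows "conjugate G h (commutator G c y) = commutator G c y"
proof -
  have cy: "c \<in> carrier G" "y \<in> carrier G"
    using c y by (simp_all add: mem_centralizer_iff)
  txt \<open>Conjugation by \<open>h\<close> multiplies \<open>c\<close> and \<open>y\<close> by elements of \<open>D\<close>, which are central in \<open>C\<close>.\<close>
  define e1 e2 where "e1 = commutator G h c" and "e2 = commutator G h y"
  have e: "e1 \<in> D" "e2 \<in> D" "e1 \<in> carrier G" "e2 \<in> carrier G"
    using h cy commutator_in_derived by (simp_all add: e1_def e2_def)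
  have comm: "e \<otimes> z = z \<otimes> e" if "e \<in> D" "z \<in> C" for e z
    using that by (auto simp: centralizer_def)
  have "conjugate G h (commutator G c y) = commutator G (e1 \<otimes> c) (e2 \<otimes> y)"
    unfolding e1_def e2_def conjugate_commutator[OF h cy]
      conjugate_eq_commutator_mult[OF h cy(1)] conjugate_eq_commutator_mult[OF h cy(2)] ..
  also have "\<dots> = commutator G c (e2 \<otimes> y)"
  proof (rule commutator_mult_commuting_left)
    have "e1 \<otimes> (e2 \<otimes> y) = e2 \<otimes> e1 \<otimes> y"
      using e cy by (simp add: D_commute flip: m_assoc)
    also have "\<dots> = e2 \<otimes> y \<otimes> e1"
      using e cy by (simp add: m_assoc comm[OF _ y])
    finally show "e1 \<otimes> (e2 \<otimes> y) = e2 \<otimes> y \<otimes> e1" .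
  qed (use e cy comm c in simp_all)
  also have "\<dots> = inv (commutator G (e2 \<otimes> y) c)"
    using e cy by (simp add: inv_commutator)
  also have "commutator G (e2 \<otimes> y) c = commutator G y c"
    using e cy comm c y by (intro commutator_mult_commuting_left) simp_all
  finally show ?thesis
    using cy by (simp add: inv_commutator)
qed

lemma central_mod_inter_centralizer:
  assumes "\<not> central_mod G D7 \<subseteq> C"
  shows "central_mod G D7 \<inter> C = center (G\<lparr>carrier := C\<rparr>)"
proof (intro equalityI subsetI)
  fix y assume "y \<in> central_mod G D7 \<inter> C"
  then have y: "y \<in> central_mod G D7" "y \<in> C"
    by simp_all
  obtain h0 where h0: "h0 \<in> carrier G" "h0 \<notin> C"
    using carrier_not_subset_centralizer by blast
  have "y \<otimes> c = c \<otimes> y" if c: "c \<in> C" for c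
  proof -
    have cc: "c \<in> carrier G" "y \<in> carrier G"
      using c y by (simp_all add: mem_centralizer_iff)
    have "commutator G c y \<in> D7"
      using y(1) cc by (auto simp: central_mod_def commutators_def)
    then obtain t :: int where t: "commutator G c y = g [^] (3 * t)"
      by (auto simp: D7_def)
    have "7 dvd 3 * t"
      using conjugate_commutator_centralizer[OF h0(1) c y(2)] pow_fixed_iff[OF h0, of "3 * t"] t
      by simp
    then have "21 dvd 3 * t"
      by presburger
    then have "commutator G c y = \<one>"
      using t pow_eq_iff[of "3 * t" 0] by (simp add: ord_generator)
    then show ?thesis
      using cc by (simp add: commutator_eq_one_iff)
  qed
  then show "y \<in> center (G\<lparr>carrier := C\<rparr>)"
    using y(2) by (simp add: center_def)
next
  fix z assume z: "z \<in> center (G\<lparr>carrier := C\<rparr>)"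
  then have zC: "z \<in> C" and comm: "\<And>c. c \<in> C \<Longrightarrow> z \<otimes> c = c \<otimes> z"
    by (simp_all add: center_def)
  have zc: "z \<in> carrier G"
    using zC by (simp add: mem_centralizer_iff)
  have Z: "subgroup (central_mod G D7) G"
    by (rule subgroup_central_mod[OF D7_normal])
  have "commutator G h z \<in> D7" if h: "h \<in> carrier G" for h
  proof -
    have "conj_exp h \<in> conj_exp ` central_mod G D7"
      using conj_exp_image[OF Z assms] conj_exp_cases[OF h] by simp
    then obtain p where p: "conj_exp h = conj_exp p" "p \<in> central_mod G D7"
      by (rule imageE)
    have pc: "p \<in> carrier G"
      using p(2) by (simp add: central_mod_def)
    define c where "c = h \<otimes> inv p"
    have c: "c \<in> C" "c \<in> carrier G"
      using conj_exp_eq_iff[OF h pc] p(1) h pc by (simp_all add: c_def)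
    have "commutator G z p \<in> D7"
      using p(2) zc by (auto simp: central_mod_def commutators_def)
    then have "inv (commutator G z p) \<in> D7"
      by (rule subgroup.m_inv_closed[OF normal_imp_subgroup[OF D7_normal]])
    then have pz: "commutator G p z \<in> D7"
      using inv_commutator[OF zc pc] by simp
    have "h = c \<otimes> p"
      using h pc by (simp add: c_def m_assoc)
    then have "commutator G h z = conjugate G c (commutator G p z) \<otimes> commutator G c z"
      using pc zc c(2) by (simp add: commutator_mult_left)
    also have "commutator G c z = \<one>"
      using c zc comm[OF c(1)] by (simp add: commutator_eq_one_iff)
    also have "conjugate G c (commutator G p z) = commutator G p z"
      using c(1) commutator_in_derived[OF pc zc] c(2) pc zc
      by (simp add: centralizer_def conjugate_eq_iff)
    finally show ?thesis
      using pz pc zc by simp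
  qed
  then show "z \<in> central_mod G D7 \<inter> C"
    using zc zC by (auto simp: central_mod_def commutators_def)
qed

lemma card_central_mod_diff:
  assumes "\<not> central_mod G D7 \<subseteq> C"
  shows "card (central_mod G D7 - C) = 2 * card (central_mod G D7 \<inter> C)"
proof -
  have Z: "subgroup (central_mod G D7) G"
    by (rule subgroup_central_mod[OF D7_normal])
  then have "card (central_mod G D7) = 3 * card (central_mod G D7 \<inter> C)"
    using card_subgroup_conj_exp[OF finite_carrier] conj_exp_image[OF Z assms] by simp
  moreover have "finite (central_mod G D7 \<inter> C)"
    using finite_subset[OF subgroup.subset[OF Z] finite_carrier] by simp
  ultimately show ?thesis
    by (simp add: card_Diff_subset_Int)
qed

lemma class_size_alternative:
  "(\<forall>x \<in> carrier G - C. card (conj_class G x) = 21)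
    \<noteq> (\<exists>S. S \<subseteq> carrier G - C
          \<and> card S = 2 * card (center (G\<lparr>carrier := C\<rparr>))
          \<and> (\<forall>x \<in> S. card (conj_class G x) = 7)
          \<and> (\<forall>x \<in> carrier G - (C \<union> S). card (conj_class G x) = 21))"
proof (cases "central_mod G D7 \<subseteq> C")
  case True
  have all_21: "\<forall>x \<in> carrier G - C. card (conj_class G x) = 21"
    using True card_conj_class_not_central_mod by blast
  have "\<one> \<in> center (G\<lparr>carrier := C\<rparr>)"
    using subgroup.one_closed[OF subgroup_centralizer_D]
    by (simp add: center_def mem_centralizer_iff)
  then have "center (G\<lparr>carrier := C\<rparr>) \<noteq> {}"
    by blast
  moreover have "finite (center (G\<lparr>carrier := C\<rparr>))"
    using finite_subset[OF _ finite_carrier] by (auto simp: center_def centralizer_def)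
  ultimately have "card (center (G\<lparr>carrier := C\<rparr>)) \<noteq> 0"
    by simp
  then have "S \<noteq> {}" if "card S = 2 * card (center (G\<lparr>carrier := C\<rparr>))" for S :: "'a set"
    using that by auto
  then show ?thesis
    using all_21 by fastforce
next
  case False
  then obtain x0 where x0: "x0 \<in> central_mod G D7" "x0 \<notin> C"
    by blast
  then have x0_mem: "x0 \<in> carrier G - C" and x0_card: "card (conj_class G x0) = 7"
    using card_conj_class_central_mod by (simp_all add: central_mod_def)
  have not_all_21: "\<not> (\<forall>x \<in> carrier G - C. card (conj_class G x) = 21)"
  proof
    assume "\<forall>x \<in> carrier G - C. card (conj_class G x) = 21"
    then have "card (conj_class G x0) = 21"
      using x0_mem by (rule bspec)
    then show False
      using x0_card by simp
  qed
  have "\<exists>S. S \<subseteq> carrier G - C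
          \<and> card S = 2 * card (center (G\<lparr>carrier := C\<rparr>))
          \<and> (\<forall>x \<in> S. card (conj_class G x) = 7)
          \<and> (\<forall>x \<in> carrier G - (C \<union> S). card (conj_class G x) = 21)"
  proof (intro exI conjI)
    show "central_mod G D7 - C \<subseteq> carrier G - C"
      by (auto simp: central_mod_def)
    show "card (central_mod G D7 - C) = 2 * card (center (G\<lparr>carrier := C\<rparr>))"
      using card_central_mod_diff[OF False] central_mod_inter_centralizer[OF False] by simp
    show "\<forall>x \<in> central_mod G D7 - C. card (conj_class G x) = 7"
      using card_conj_class_central_mod by blast
    show "\<forall>x \<in> carrier G - (C \<union> (central_mod G D7 - C)). card (conj_class G x) = 21"
      using card_conj_class_not_central_mod by blast
  qed
  then show ?thesis
    using not_all_21 by blast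
qed

end

lemma (in group) cyclic_normal_subgroup_derived:
  assumes iso: "G\<lparr>carrier := derived G (carrier G)\<rparr> \<cong> integer_mod_group n" and n: "n > 1"
  obtains g where "cyclic_normal_subgroup (derived G (carrier G)) G g" "ord g = n"
proof -
  have normal: "derived G (carrier G) \<lhd> G"
    by (rule derived_self_is_normal)
  obtain g where g: "g \<in> derived G (carrier G)"
    "derived G (carrier G) = range (\<lambda>i::int. g [^] i)" "ord g = n"
    using iso_integer_mod_group_generator[OF normal_imp_subgroup[OF normal] iso n] .
  have "g \<in> carrier G"
    using subsetD[OF derived_in_carrier[OF subset_refl] g(1)] .
  then have "cyclic_normal_subgroup (derived G (carrier G)) G g"
    using n g(3)
    by (intro cyclic_normal_subgroup.intro cyclic_normal_subgroup_axioms.intro normal g(2)) simp_all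
  then show thesis
    using that g(3) by blast
qed

lemma (in group) derived_subset_center_if_iso_15:
  assumes "odd (order G)" and iso: "G\<lparr>carrier := derived G (carrier G)\<rparr> \<cong> integer_mod_group 15"
  shows "derived G (carrier G) \<subseteq> center G"
proof -
  obtain g where g: "cyclic_normal_subgroup (derived G (carrier G)) G g" "ord g = 15"
    by (rule cyclic_normal_subgroup_derived[OF iso]) auto
  show ?thesis
    by (rule cyclic_normal_subgroup.D_subset_center_if_ord_15[OF g(1) assms(1) g(2)])
qed

lemma (in group) odd_order_cyclic_derived_21_if_iso_21:
  assumes "finite (carrier G)" "odd (order G)"
    and iso: "G\<lparr>carrier := derived G (carrier G)\<rparr> \<cong> integer_mod_group 21"
    and "\<not> derived G (carrier G) \<subseteq> center G"
  obtains g where "odd_order_cyclic_derived_21 G g"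
proof -
  obtain g where g: "cyclic_normal_subgroup (derived G (carrier G)) G g" "ord g = 21"
    by (rule cyclic_normal_subgroup_derived[OF iso]) auto
  have "odd_order_cyclic_derived_21 G g"
    by (intro odd_order_cyclic_derived_21.intro odd_order_cyclic_derived_21_axioms.intro
        g assms(1,2,4))
  then show thesis
    by (rule that)
qed

theorem lemma4p1:
  fixes G :: "('a, 'b) monoid_scheme"
  assumes "group G" and "finite (carrier G)" and "odd (order G)"
  shows "(G\<lparr>carrier := commutator_subgroup G\<rparr> \<cong> integer_mod_group 15
            \<longrightarrow> commutator_subgroup G \<subseteq> center G)
       \<and> ((G\<lparr>carrier := commutator_subgroup G\<rparr> \<cong> integer_mod_group 21
            \<and> \<not> commutator_subgroup G \<subseteq> center G)
          \<longrightarrow> (let C = centralizer G (commutator_subgroup G) in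
                card (rcosets\<^bsub>G\<^esub> C) = 3
              \<and> card (commutator_subgroup G \<inter> center G) = 3
              \<and> ((\<forall>x \<in> carrier G - C. card (conj_class G x) = 21)
                 \<noteq> (\<exists>S. S \<subseteq> carrier G - C
                        \<and> card S = 2 * card (center (G\<lparr>carrier := C\<rparr>))
                        \<and> (\<forall>x \<in> S. card (conj_class G x) = 7)
                        \<and> (\<forall>x \<in> carrier G - (C \<union> S). card (conj_class G x) = 21)))))"
proof -
  interpret group G
    by (rule assms(1))
  let "(?iso15 \<longrightarrow> ?central) \<and> (?iso21 \<longrightarrow> ?class_sizes)" = ?thesis
  have ?central if ?iso15
    using derived_subset_center_if_iso_15[OF assms(3) that] .
  moreover have ?class_sizes if ?iso21
  proof -
    obtain g where "odd_order_cyclic_derived_21 G g"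
      using odd_order_cyclic_derived_21_if_iso_21 assms(2,3) \<open>?iso21\<close> by blast
    then interpret odd_order_cyclic_derived_21 G g .
    show ?thesis
      unfolding Let_def
      using card_rcosets_centralizer card_derived_inter_center class_size_alternative by blast
  qed
  ultimately show ?thesis
    by blast
qed

end
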